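(* The sub-set-operad of $\mathrm{RWS}$ generated by $A_\mu$, $A_\prec$, $A_\succ$ consists exactly of the recursively labelled red and white trees having no node with empty label set.
   Context: Red and white trees: $\mathrm{RW}(n)$ is the set of finite rooted trees (children unordered) whose nodes $z$ carry possibly empty label sets $L(z)\subseteq[n]$ partitioning $[n]$, each empty node having at least two children; labelled nodes are white, an empty node is red iff all its children are white. Composition $T_1\circ_xT_2$ ($T_1\in\mathrm{RW}(m)$, $T_2\in\mathrm{RW}(n)$): relabel $T_1$ by $y\mapsto y+n-1$ for $y>x$ and $T_2$ by $y\mapsto y+x-1$; $z\ni x$ in $T_1$, $r$ = root of $T_2$. (W) $r$ not red: remove $x$ from $L(z)$, add $L(r)$ to $L(z)$, children of $r$ become children of $z$. (R1) $r$ red, $T_1$ the single node $\{x\}$: result $T_2$. (R2) $r$ red and ($z$ has a child or $|L(z)|\ge2$): remove $x$ from $L(z)$, attach $T_2$ as child subtree of $z$. (R3) $r$ red, $z$ non-root leaf with $L(z)=\{x\}$: delete $z$, children of $r$ become children of the parent of $z$. Colours recomputed. A tree is recursively labelled if for each node the union of label sets in its subtree is an interval of integers. $\mathrm{RWS}$ is the sub-set-operad generated by $A_\mu$ (single node $\{1,2\}$), $A_\prec$ (root $\{1\}$ with child $\{2\}$), $A_\succ$ (root $\{2\}$ with child $\{1\}$), $A_\odot$ (empty red root with children $\{1\},\{2\}$). *)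

theory Defs
  imports Main "HOL-Library.Multiset"
begin

text \<open>Red and white trees: finite rooted trees with unordered children (a multiset of
  subtrees); each node carries a (possibly empty) label set.\<close>

datatype rwt = Node (lbl: "nat set") (kids: "rwt multiset")

primrec subtrees :: "rwt \<Rightarrow> rwt multiset" where
  "subtrees (Node L C) = add_mset (Node L C) (\<Sum>\<^sub># (image_mset subtrees C))"

primrec labels :: "rwt \<Rightarrow> nat set" where
  "labels (Node L C) = L \<union> \<Union> (set_mset (image_mset labels C))"

definition RW :: "nat \<Rightarrow> rwt set" where
  "RW n = {T. (\<forall>S \<in># subtrees T. finite (lbl S) \<and> (lbl S = {} \<longrightarrow> 2 \<le> size (kids S)))
              \<and> \<Sum>\<^sub># (image_mset (\<lambda>S. mset_set (lbl S)) (subtrees T)) = mset_set {1..n}}"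

definition white :: "rwt \<Rightarrow> bool" where
  "white T \<longleftrightarrow> lbl T \<noteq> {}"

definition red :: "rwt \<Rightarrow> bool" where
  "red T \<longleftrightarrow> lbl T = {} \<and> (\<forall>c \<in># kids T. white c)"

primrec relabel :: "(nat \<Rightarrow> nat) \<Rightarrow> rwt \<Rightarrow> rwt" where
  "relabel f (Node L C) = Node (f ` L) (image_mset (relabel f) C)"

text \<open>Grafting at a non-root node: result is the multiset of trees replacing that node
  among the children of its parent (rules W, R2, R3).  Here T2 is the (already relabelled)
  second tree and x the (relabelled) grafting label.\<close>
primrec graft :: "nat \<Rightarrow> rwt \<Rightarrow> rwt \<Rightarrow> rwt multiset" where
  "graft x T2 (Node L C) =
     (if x \<in> L then
        (if \<not> red T2 then {# Node ((L - {x}) \<union> lbl T2) (C + kids T2) #}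
         else if C \<noteq> {#} \<or> 2 \<le> card L then {# Node (L - {x}) (add_mset T2 C) #}
         else kids T2)
      else {# Node L (\<Sum>\<^sub># (image_mset (graft x T2) C)) #})"

fun graft_root :: "nat \<Rightarrow> rwt \<Rightarrow> rwt \<Rightarrow> rwt" where
  "graft_root x T2 (Node L C) =
     (if x \<in> L then
        (if \<not> red T2 then Node ((L - {x}) \<union> lbl T2) (C + kids T2)
         else if C \<noteq> {#} \<or> 2 \<le> card L then Node (L - {x}) (add_mset T2 C)
         else T2)
      else Node L (\<Sum>\<^sub># (image_mset (graft x T2) C)))"

text \<open>Partial composition T1 o_x T2 where T2 has arity n.\<close>
definition rw_comp :: "nat \<Rightarrow> nat \<Rightarrow> rwt \<Rightarrow> rwt \<Rightarrow> rwt" where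
  "rw_comp n x T1 T2 =
     graft_root x (relabel (\<lambda>y. y + x - 1) T2)
                  (relabel (\<lambda>y. if x < y then y + n - 1 else y) T1)"

definition A_unit :: rwt where "A_unit = Node {1} {#}"
definition A_mu :: rwt where "A_mu = Node {1, 2} {#}"
definition A_prec :: rwt where "A_prec = Node {1} {# Node {2} {#} #}"
definition A_succ :: rwt where "A_succ = Node {2} {# Node {1} {#} #}"
definition A_odot :: rwt where "A_odot = Node {} {# Node {1} {#}, Node {2} {#} #}"

text \<open>Sub-(non-symmetric) set-operad generated by a family of generators G (arity, tree):
  contains the unit and the generators, closed under partial compositions.\<close>
inductive gen_by :: "(nat \<times> rwt) set \<Rightarrow> nat \<Rightarrow> rwt \<Rightarrow> bool" for G where
  unit: "gen_by G 1 A_unit"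
| gen: "(k, T) \<in> G \<Longrightarrow> gen_by G k T"
| comp: "gen_by G m T1 \<Longrightarrow> gen_by G n T2 \<Longrightarrow> 1 \<le> x \<Longrightarrow> x \<le> m
          \<Longrightarrow> gen_by G (m + n - 1) (rw_comp n x T1 T2)"

abbreviation RWS :: "nat \<Rightarrow> rwt \<Rightarrow> bool" where
  "RWS \<equiv> gen_by {(2, A_mu), (2, A_prec), (2, A_succ), (2, A_odot)}"

definition rec_labelled :: "rwt \<Rightarrow> bool" where
  "rec_labelled T \<longleftrightarrow> (\<forall>S \<in># subtrees T. \<exists>a b. labels S = {a..b})"

end

theory Submission
  imports Defs
begin

(* Both inclusions are organised around the invariant  rec_white n T : all label sets are
   finite and nonempty, the multiset of all labels is {1..n}, and T is recursively labelled.
   No such tree has a red root, so every composition we meet follows rule (W) and is the simple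
   grafting  wgraft , which merges the root of the relabelled second tree into the node of the
   first tree that carries x.

   Soundness (generated_rec_white): the unit and the generators satisfy the invariant, and it is
   preserved by composition -- the label multisets add up, and the label interval of each
   subtree is either shifted or enlarged by the inserted block x..x+n-1.

   Completeness (rec_white_generated), by induction on n: a tree with at least two labels has an
   adjacent pair, i.e. a node carrying x and x+1, or one of them with the other one on a leaf
   child.  Deleting x+1 (resp. x) and closing the gap yields a tree of arity n-1 satisfying the
   invariant, and composing it at x with A_mu, A_prec or A_succ rebuilds the original tree. *)

lemma image_mset_sum_mset: "image_mset f (\<Sum>\<^sub># M) = \<Sum>\<^sub># (image_mset (image_mset f) M)"
  by (induction M) auto

lemma sum_mset_image_sum_mset:
  "\<Sum>\<^sub># (image_mset g (\<Sum>\<^sub># M)) = \<Sum>\<^sub># (image_mset (\<lambda>X. \<Sum>\<^sub># (image_mset g X)) M)"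
  by (induction M) auto

lemma filter_sum_mset: "filter_mset Q (\<Sum>\<^sub># M) = \<Sum>\<^sub># (image_mset (filter_mset Q) M)"
  by (induction M) auto

lemma count_sum_mset: "count (\<Sum>\<^sub># M) z = (\<Sum>X\<in>#M. count X z)"
  by (induction M) auto

lemma sum_mset_member_le: "c \<in># C \<Longrightarrow> (f c :: nat) \<le> (\<Sum>c\<in>#C. f c)"
  by (metis le_add1 multi_member_split sum_mset.insert)

lemma image_mset_fixed: "(\<And>c. c \<in># C \<Longrightarrow> f c = c) \<Longrightarrow> image_mset f C = C"
  by (induction C) auto

lemma subtree_self: "T \<in># subtrees T"
  by (cases T) auto

lemma kid_subtree: "c \<in># C \<Longrightarrow> c \<in># subtrees (Node L C)"
  using subtree_self by fastforce

lemma subtree_trans: "S \<in># subtrees T \<Longrightarrow> U \<in># subtrees S \<Longrightarrow> U \<in># subtrees T"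
  by (induction T) auto

lemma lbl_subset_labels: "lbl T \<subseteq> labels T"
  by (cases T) auto

lemma labels_subtree: "S \<in># subtrees T \<Longrightarrow> labels S \<subseteq> labels T"
  by (induction T) auto

lemma labels_eq: "labels T = lbl T \<union> (\<Union>c\<in>set_mset (kids T). labels c)"
  by (cases T) auto

definition label_mset :: "rwt \<Rightarrow> nat multiset" where
  "label_mset T = \<Sum>\<^sub># (image_mset (\<lambda>S. mset_set (lbl S)) (subtrees T))"

lemma label_mset_Node: "label_mset (Node L C) = mset_set L + \<Sum>\<^sub># (image_mset label_mset C)"
  unfolding label_mset_def by (simp add: sum_mset_image_sum_mset image_mset.compositionality comp_def)

lemma label_mset_eq: "label_mset T = mset_set (lbl T) + \<Sum>\<^sub># (image_mset label_mset (kids T))"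
  by (cases T) (simp add: label_mset_Node)

lemma count_label_mset_Node:
  "count (label_mset (Node L C)) z = count (mset_set L) z + (\<Sum>c\<in>#C. count (label_mset c) z)"
  by (simp add: label_mset_Node count_sum_mset image_mset.compositionality comp_def)

lemma count_label_mset_subtree:
  "S \<in># subtrees T \<Longrightarrow> count (label_mset S) z \<le> count (label_mset T) z"
proof (induction T)
  case (Node L C)
  show ?case
  proof (cases "S = Node L C")
    case False
    then obtain c where c: "c \<in># C" "S \<in># subtrees c" using Node.prems by auto
    have "count (label_mset c) z \<le> count (label_mset (Node L C)) z"
      using sum_mset_member_le[OF c(1), of "\<lambda>c. count (label_mset c) z"]
      by (simp add: count_label_mset_Node)
    then show ?thesis using Node.IH[OF c] by simp
  qed simp
qed

definition finite_labels :: "rwt \<Rightarrow> bool" where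
  "finite_labels T \<longleftrightarrow> (\<forall>S\<in>#subtrees T. finite (lbl S))"

definition all_labelled :: "rwt \<Rightarrow> bool" where
  "all_labelled T \<longleftrightarrow> (\<forall>S\<in>#subtrees T. lbl S \<noteq> {})"

definition distinct_labels :: "rwt \<Rightarrow> bool" where
  "distinct_labels T \<longleftrightarrow> (\<forall>z. count (label_mset T) z \<le> 1)"

lemma subtree_inherits:
  assumes "S \<in># subtrees T"
  shows "finite_labels T \<Longrightarrow> finite_labels S" "all_labelled T \<Longrightarrow> all_labelled S"
    "distinct_labels T \<Longrightarrow> distinct_labels S" "rec_labelled T \<Longrightarrow> rec_labelled S"
  using assms subtree_trans[OF assms] count_label_mset_subtree[OF assms]
  unfolding finite_labels_def all_labelled_def distinct_labels_def rec_labelled_def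
  by (auto intro: le_trans)

lemmas kid_inherits = subtree_inherits[OF kid_subtree]

lemma finite_labels_Node: "finite_labels (Node L C) \<longleftrightarrow> finite L \<and> (\<forall>c\<in>#C. finite_labels c)"
  unfolding finite_labels_def by auto

lemma all_labelled_Node: "all_labelled (Node L C) \<longleftrightarrow> L \<noteq> {} \<and> (\<forall>c\<in>#C. all_labelled c)"
  unfolding all_labelled_def by auto

lemma lbl_nonempty: "all_labelled T \<Longrightarrow> lbl T \<noteq> {}"
  unfolding all_labelled_def using subtree_self by blast

lemma set_label_mset: "finite_labels T \<Longrightarrow> set_mset (label_mset T) = labels T"
  by (induction T) (auto simp: label_mset_Node finite_labels_Node)

lemma count_label_mset_pos: "finite_labels T \<Longrightarrow> z \<in> labels T \<longleftrightarrow> 0 < count (label_mset T) z"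
  using set_label_mset by fastforce

lemma distinct_labels_mset_set: "label_mset T = mset_set A \<Longrightarrow> distinct_labels T"
  unfolding distinct_labels_def by (simp add: count_mset_set')

lemma node_label_not_in_kid:
  assumes "finite_labels (Node L C)" "distinct_labels (Node L C)" "z \<in> L" "c \<in># C"
  shows "z \<notin> labels c"
proof
  assume "z \<in> labels c"
  then have "0 < count (label_mset c) z"
    using count_label_mset_pos kid_inherits(1)[OF assms(4,1)] by blast
  moreover have "count (mset_set L) z = 1" using assms(1,3) by (simp add: finite_labels_Node)
  moreover have "count (label_mset c) z \<le> (\<Sum>c\<in>#C. count (label_mset c) z)"
    using sum_mset_member_le[OF assms(4)] .
  moreover have "count (label_mset (Node L C)) z \<le> 1"
    using assms(2) unfolding distinct_labels_def by blast
  ultimately show False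
    using count_label_mset_Node[of L C z] by linarith
qed

lemma kids_disjoint:
  assumes "finite_labels (Node L C)" "distinct_labels (Node L C)" "C = add_mset c0 C'"
    and "z \<in> labels c0" "c \<in># C'"
  shows "z \<notin> labels c"
proof
  assume "z \<in> labels c"
  then have "1 \<le> count (label_mset c) z" "1 \<le> count (label_mset c0) z"
    using assms count_label_mset_pos kid_inherits(1)[OF _ assms(1)] by (auto simp: Suc_le_eq)
  moreover have "count (label_mset c) z \<le> (\<Sum>c\<in>#C'. count (label_mset c) z)"
    using sum_mset_member_le[OF assms(5)] .
  moreover have "count (label_mset (Node L C)) z \<le> 1"
    using assms(2) unfolding distinct_labels_def by blast
  moreover have "count (label_mset (Node L C)) z
      = count (mset_set L) z + count (label_mset c0) z + (\<Sum>c\<in>#C'. count (label_mset c) z)"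
    using assms(3) count_label_mset_Node[of L C z] by simp
  ultimately show False by linarith
qed

section \<open>Relabellings of intervals\<close>

text \<open>The relabelling applied to the outer tree of a composition o_x with an arity-n tree:
  the labels above x move up by n - 1 to make room for the inserted block x..x+n-1.\<close>
definition gap_up :: "nat \<Rightarrow> nat \<Rightarrow> nat \<Rightarrow> nat" where
  "gap_up x n y = (if x < y then y + n - 1 else y)"

lemma inj_gap_up: "1 \<le> n \<Longrightarrow> inj (gap_up x n)"
  unfolding gap_up_def inj_def by auto

lemma gap_up_eq_self: "1 \<le> n \<Longrightarrow> gap_up x n y = x \<longleftrightarrow> y = x"
  unfolding gap_up_def by auto

lemma gap_up_image:
  assumes "1 \<le> n"
  shows "gap_up x n ` {a..b} = {a..min b x} \<union> {max a (x+1) + n - 1 .. b + n - 1}"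
proof
  show "gap_up x n ` {a..b} \<subseteq> {a..min b x} \<union> {max a (x+1) + n - 1 .. b + n - 1}"
    using assms by (auto simp: gap_up_def)
  show "{a..min b x} \<union> {max a (x+1) + n - 1 .. b + n - 1} \<subseteq> gap_up x n ` {a..b}"
  proof
    fix y assume "y \<in> {a..min b x} \<union> {max a (x+1) + n - 1 .. b + n - 1}"
    then consider "a \<le> y" "y \<le> b" "y \<le> x" | "max a (x+1) + n - 1 \<le> y" "y \<le> b + n - 1"
      by auto
    then show "y \<in> gap_up x n ` {a..b}"
    proof cases
      case 1 then show ?thesis by (intro image_eqI[of _ _ y]) (auto simp: gap_up_def)
    next
      case 2 then show ?thesis
        using assms by (intro image_eqI[of _ _ "y + 1 - n"]) (auto simp: gap_up_def)
    qed
  qed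
qed

lemma gap_up_image_fill:
  "1 \<le> n \<Longrightarrow> a \<le> x \<Longrightarrow> x \<le> b \<Longrightarrow> gap_up x n ` {a..b} \<union> {x..x+n-1} = {a..b+n-1}"
  by (auto simp: gap_up_image)

lemma gap_up_image_interval:
  assumes "1 \<le> n" "x \<notin> {a..b}"
  shows "\<exists>a' b'. gap_up x n ` {a..b} = {a'..b'}"
proof -
  consider "b < x" | "x < a" | "b < a" using assms(2) by force
  then show ?thesis
  proof cases
    case 1
    then have "gap_up x n ` {a..b} = {a..b}" using assms by (auto simp: gap_up_image)
    then show ?thesis by blast
  next
    case 2
    then have "gap_up x n ` {a..b} = {a+n-1..b+n-1}" using assms by (auto simp: gap_up_image)
    then show ?thesis by blast
  qed auto
qed

lemma shift_image: fixes x :: nat shows "1 \<le> x \<Longrightarrow> (\<lambda>y. y + x - 1) ` {a..b} = {a+x-1..b+x-1}"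
  using image_add_atLeastAtMost[of "x - 1" a b] by (simp add: add.commute)

text \<open>The inverse relabelling used when a label r \<in> {x, x+1} is deleted: the labels above x
  move down by one.\<close>
definition close_gap :: "nat \<Rightarrow> nat \<Rightarrow> nat" where
  "close_gap x y = (if y \<le> x then y else y - 1)"

lemma inj_on_close_gap: "r \<in> {x, Suc x} \<Longrightarrow> inj_on (close_gap x) (A - {r})"
  unfolding close_gap_def inj_on_def by auto

lemma close_gap_image_remove:
  assumes "r \<in> {x, Suc x}" "r \<in> {a..b}" "1 \<le> x"
  shows "close_gap x ` ({a..b} - {r}) = {a..b-1}"
proof
  show "close_gap x ` ({a..b} - {r}) \<subseteq> {a..b-1}" using assms by (auto simp: close_gap_def)
  show "{a..b-1} \<subseteq> close_gap x ` ({a..b} - {r})"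
  proof
    fix z assume z: "z \<in> {a..b-1}"
    show "z \<in> close_gap x ` ({a..b} - {r})"
    proof (cases "z < r")
      case True
      then show ?thesis using z assms by (intro image_eqI[of _ _ z]) (auto simp: close_gap_def)
    next
      case False
      then show ?thesis using z assms by (intro image_eqI[of _ _ "Suc z"]) (auto simp: close_gap_def)
    qed
  qed
qed

lemma close_gap_image_interval:
  assumes "r \<in> {x, Suc x}" "1 \<le> x"
  shows "\<exists>a' b'. close_gap x ` ({a..b} - {r}) = {a'..b'}"
proof (cases "r \<in> {a..b}")
  case True
  then show ?thesis using close_gap_image_remove[OF assms(1) True assms(2)] by blast
next
  case False
  then have "{a..b} - {r} = {a..b}" by auto
  consider "b \<le> x" | "x < a" "a \<le> b" | "a \<le> x" "x < b" | "b < a" by linarith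
  then show ?thesis
  proof cases
    case 1
    then have "close_gap x ` {a..b} = {a..b}" by (auto simp: close_gap_def)
    then show ?thesis using \<open>{a..b} - {r} = {a..b}\<close> by metis
  next
    case 2
    have "close_gap x ` {a..b} = {a-1..b-1}"
    proof
      show "close_gap x ` {a..b} \<subseteq> {a-1..b-1}" using 2 by (auto simp: close_gap_def)
      show "{a-1..b-1} \<subseteq> close_gap x ` {a..b}"
      proof
        fix z assume "z \<in> {a-1..b-1}"
        then show "z \<in> close_gap x ` {a..b}"
          using 2 by (intro image_eqI[of _ _ "Suc z"]) (auto simp: close_gap_def)
      qed
    qed
    then show ?thesis using \<open>{a..b} - {r} = {a..b}\<close> by metis
  next
    case 3
    then show ?thesis using assms False by auto
  next
    case 4
    then show ?thesis by (intro exI[of _ 1] exI[of _ 0]) auto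
  qed
qed

text \<open>Closing the gap at x and then composing at x with a binary tree merges x+1 into x.\<close>
definition merge_succ :: "nat \<Rightarrow> nat \<Rightarrow> nat" where
  "merge_succ x y = (if y = Suc x then x else y)"

lemma gap_up_close_gap: "gap_up x 2 \<circ> close_gap x = merge_succ x"
  by (auto simp: fun_eq_iff gap_up_def close_gap_def merge_succ_def)

lemma lbl_relabel [simp]: "lbl (relabel f T) = f ` lbl T"
  by (cases T) auto

lemma labels_relabel [simp]: "labels (relabel f T) = f ` labels T"
  by (induction T) (auto simp: image_Union)

lemma relabel_comp: "relabel f (relabel g T) = relabel (f \<circ> g) T"
  by (induction T) (auto simp: image_mset.compositionality image_comp intro!: image_mset_cong)

lemma relabel_id: "(\<And>y. y \<in> labels T \<Longrightarrow> f y = y) \<Longrightarrow> relabel f T = T"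
  by (induction T) (auto intro!: image_mset_fixed)

lemma subtrees_relabel: "subtrees (relabel f T) = image_mset (relabel f) (subtrees T)"
  by (induction T)
    (auto simp: image_mset_sum_mset image_mset.compositionality comp_def
      intro!: arg_cong[where f=sum_mset] image_mset_cong)

lemma finite_labels_relabel: "finite_labels T \<Longrightarrow> finite_labels (relabel f T)"
  unfolding finite_labels_def by (auto simp: subtrees_relabel)

lemma all_labelled_relabel: "all_labelled (relabel f T) \<longleftrightarrow> all_labelled T"
  unfolding all_labelled_def by (auto simp: subtrees_relabel)

lemma label_mset_relabel:
  "inj_on f (labels T) \<Longrightarrow> finite_labels T \<Longrightarrow> label_mset (relabel f T) = image_mset f (label_mset T)"
proof (induction T)
  case (Node L C)
  have IH: "\<And>c. c \<in># C \<Longrightarrow> label_mset (relabel f c) = image_mset f (label_mset c)"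
    using Node by (auto simp: finite_labels_Node intro: inj_on_subset)
  have "inj_on f L" using Node.prems by (auto intro: inj_on_subset)
  then have "mset_set (f ` L) = image_mset f (mset_set L)" by (simp add: image_mset_mset_set)
  moreover have "image_mset label_mset (image_mset (relabel f) C)
      = image_mset (\<lambda>c. image_mset f (label_mset c)) C"
    using IH by (auto simp: image_mset.compositionality intro!: image_mset_cong)
  ultimately show ?case
    by (simp add: label_mset_Node image_mset_sum_mset image_mset.compositionality comp_def)
qed

section \<open>Composition with a tree whose root is white\<close>

text \<open>When the inserted tree B has a nonempty root, every composition follows rule (W): the root
  of B is merged into the node carrying x.\<close>
primrec wgraft :: "nat \<Rightarrow> rwt \<Rightarrow> rwt \<Rightarrow> rwt" where
  "wgraft x B (Node L C) =
     (if x \<in> L then Node ((L - {x}) \<union> lbl B) (C + kids B) else Node L (image_mset (wgraft x B) C))"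

lemma graft_white: "\<not> red B \<Longrightarrow> graft x B T = {# wgraft x B T #}"
proof (induction T)
  case (Node L C)
  then have "\<Sum>\<^sub># (image_mset (graft x B) C) = image_mset (wgraft x B) C"
    by (simp cong: image_mset_cong)
  with Node show ?case by simp
qed

lemma graft_root_white: "\<not> red B \<Longrightarrow> graft_root x B T = wgraft x B T"
  by (cases T) (simp add: graft_white cong: image_mset_cong)

lemma rw_comp_white:
  assumes "lbl T2 \<noteq> {}"
  shows "rw_comp n x T1 T2 = wgraft x (relabel (\<lambda>y. y + x - 1) T2) (relabel (gap_up x n) T1)"
proof -
  have "(\<lambda>y. if x < y then y + n - 1 else y) = gap_up x n"
    by (simp add: fun_eq_iff gap_up_def)
  moreover have "\<not> red (relabel (\<lambda>y. y + x - 1) T2)" using assms by (simp add: red_def)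
  ultimately show ?thesis unfolding rw_comp_def by (simp add: graft_root_white)
qed

lemma wgraft_id: "x \<notin> labels T \<Longrightarrow> wgraft x B T = T"
  by (induction T) (auto intro!: image_mset_fixed)

lemma lbl_wgraft: "lbl (wgraft x B T) = (if x \<in> lbl T then (lbl T - {x}) \<union> lbl B else lbl T)"
  by (cases T) auto

lemma labels_wgraft:
  "x \<in> labels B \<Longrightarrow> labels (wgraft x B T) = (if x \<in> labels T then labels T \<union> labels B else labels T)"
proof (induction T)
  case (Node L C)
  show ?case
  proof (cases "x \<in> L")
    case True
    then show ?thesis using Node.prems labels_eq[of B] by auto
  next
    case False
    then have "labels (wgraft x B (Node L C))
        = L \<union> (\<Union>c\<in>set_mset C. if x \<in> labels c then labels c \<union> labels B else labels c)"
      using Node.IH Node.prems by simp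
    then show ?thesis using False by auto
  qed
qed

lemma subtrees_wgraft:
  assumes "finite_labels T" "distinct_labels T" "S' \<in># subtrees (wgraft x B T)"
  shows "(\<exists>S\<in>#subtrees T. x \<in> labels S \<and> S' = wgraft x B S)
    \<or> (S' \<in># subtrees T \<and> x \<notin> labels S') \<or> S' \<in># subtrees B"
  using assms
proof (induction T arbitrary: S')
  case (Node L C)
  show ?case
  proof (cases "S' = wgraft x B (Node L C)")
    case True
    then show ?thesis using subtree_self[of "Node L C"] wgraft_id[of x "Node L C" B]
      by (cases "x \<in> labels (Node L C)") auto
  next
    case notroot: False
    show ?thesis
    proof (cases "x \<in> L")
      case True
      then obtain c where c: "c \<in># C + kids B" "S' \<in># subtrees c" using Node.prems(3) notroot by auto
      show ?thesis
      proof (cases "c \<in># C")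
        case True
        then have "x \<notin> labels S'"
          using node_label_not_in_kid Node.prems(1,2) \<open>x \<in> L\<close> labels_subtree[OF c(2)] by blast
        then show ?thesis using c True by auto
      next
        case False
        then show ?thesis using c subtree_trans[OF kid_subtree] by (cases B) auto
      qed
    next
      case False
      then obtain c where c: "c \<in># C" "S' \<in># subtrees (wgraft x B c)"
        using Node.prems(3) notroot by auto
      then show ?thesis
        using Node.IH[OF c(1) kid_inherits(1)[OF c(1) Node.prems(1)]
          kid_inherits(3)[OF c(1) Node.prems(2)] c(2)] by auto
    qed
  qed
qed

lemma unique_kid_with_label:
  assumes fin: "\<forall>c\<in>#C. finite_labels c" and total: "(\<Sum>c\<in>#C. count (label_mset c) x) = 1"
  obtains c0 C' where "C = add_mset c0 C'" "count (label_mset c0) x = 1" "\<forall>c\<in>#C'. x \<notin> labels c"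
proof -
  have "\<exists>c0. c0 \<in># C \<and> count (label_mset c0) x \<noteq> 0"
  proof (rule ccontr)
    assume "\<nexists>c0. c0 \<in># C \<and> count (label_mset c0) x \<noteq> 0"
    then have "(\<Sum>c\<in>#C. count (label_mset c) x) = 0" by (auto simp: sum_mset_0_iff count_eq_zero_iff)
    then show False using total by simp
  qed
  then obtain c0 where c0: "c0 \<in># C" "count (label_mset c0) x \<noteq> 0" by blast
  obtain C' where C': "C = add_mset c0 C'" using c0 by (metis multi_member_split)
  have split: "count (label_mset c0) x + (\<Sum>c\<in>#C'. count (label_mset c) x) = 1"
    using total C' by simp
  then have c01: "count (label_mset c0) x = 1" using c0(2) by linarith
  have "x \<notin> labels c" if "c \<in># C'" for c
  proof -
    have "count (label_mset c) x = 0"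
      using split c01 sum_mset_member_le[OF that, of "\<lambda>c. count (label_mset c) x"] by linarith
    moreover have "finite_labels c" using fin C' that by simp
    ultimately show ?thesis using count_label_mset_pos[of c x] by (metis less_irrefl)
  qed
  then show ?thesis using that C' c01 by blast
qed

lemma label_mset_wgraft:
  assumes "finite_labels T" "finite (lbl B)" "count (label_mset T) x = 1"
    and "labels T \<inter> labels B \<subseteq> {x}"
  shows "label_mset (wgraft x B T) + {#x#} = label_mset T + label_mset B"
  using assms
proof (induction T)
  case (Node L C)
  show ?case
  proof (cases "x \<in> L")
    case True
    have fL: "finite L" using Node.prems(1) by (simp add: finite_labels_Node)
    have "(L - {x}) \<inter> lbl B = {}" using Node.prems(4) lbl_subset_labels[of B] True by auto
    then have union: "mset_set ((L - {x}) \<union> lbl B) = mset_set (L - {x}) + mset_set (lbl B)"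
      using mset_set_Union[OF _ Node.prems(2)] fL by simp
    have remove: "mset_set L = add_mset x (mset_set (L - {x}))"
      using fL True by (simp add: mset_set.remove)
    have "label_mset (wgraft x B (Node L C))
        = mset_set ((L - {x}) \<union> lbl B) + (\<Sum>\<^sub># (image_mset label_mset C) + \<Sum>\<^sub># (image_mset label_mset (kids B)))"
      using True by (simp add: label_mset_Node)
    then show ?thesis
      using union remove label_mset_eq[of B] label_mset_Node[of L C] by (simp add: ac_simps)
  next
    case False
    have fin: "\<forall>c\<in>#C. finite_labels c" using Node.prems(1) by (simp add: finite_labels_Node)
    moreover have "(\<Sum>c\<in>#C. count (label_mset c) x) = 1"
      using False Node.prems(3) count_label_mset_Node[of L C x] by simp
    ultimately obtain c0 C' where C': "C = add_mset c0 C'" and c01: "count (label_mset c0) x = 1"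
      and "\<forall>c\<in>#C'. x \<notin> labels c"
      by (rule unique_kid_with_label)
    then have "image_mset (wgraft x B) C' = C'" by (auto intro!: image_mset_fixed wgraft_id)
    then have graft: "wgraft x B (Node L C) = Node L (add_mset (wgraft x B c0) C')"
      using False C' by simp
    have c0: "c0 \<in># C" using C' by simp
    have "label_mset (wgraft x B c0) + {#x#} = label_mset c0 + label_mset B"
      using Node.IH[OF c0 _ Node.prems(2) c01] fin c0 Node.prems(4) by auto
    then show ?thesis using graft C' by (simp add: label_mset_Node ac_simps)
  qed
qed

section \<open>Soundness: generated trees are recursively labelled and white\<close>

definition rec_white :: "nat \<Rightarrow> rwt \<Rightarrow> bool" where
  "rec_white n T \<longleftrightarrow>
     finite_labels T \<and> all_labelled T \<and> label_mset T = mset_set {1..n} \<and> rec_labelled T"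

lemma rec_white_iff_RW:
  "(T \<in> RW n \<and> rec_labelled T \<and> (\<forall>S \<in># subtrees T. lbl S \<noteq> {})) \<longleftrightarrow> rec_white n T"
  unfolding rec_white_def RW_def finite_labels_def all_labelled_def label_mset_def by auto

lemma labels_rec_white: "rec_white n T \<Longrightarrow> labels T = {1..n}"
  using set_label_mset[of T] unfolding rec_white_def by auto

lemma rec_white_distinct: "rec_white n T \<Longrightarrow> distinct_labels T"
  unfolding rec_white_def using distinct_labels_mset_set by blast

lemma rec_white_arity_pos:
  assumes "rec_white n T" shows "1 \<le> n"
proof -
  have "lbl T \<noteq> {}" using assms lbl_nonempty unfolding rec_white_def by blast
  then have "{1..n} \<noteq> {}" using lbl_subset_labels[of T] labels_rec_white[OF assms] by blast
  then show ?thesis by simp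
qed

lemma label_mset_relabel_rec_white:
  "rec_white n T \<Longrightarrow> inj_on f {1..n} \<Longrightarrow> label_mset (relabel f T) = mset_set (f ` {1..n})"
  using label_mset_relabel[of f T] labels_rec_white[of n T]
  unfolding rec_white_def by (simp add: image_mset_mset_set)

lemma wgraft_invariants:
  assumes "finite_labels A" "distinct_labels A" "all_labelled A"
    and "finite_labels B" "all_labelled B"
  shows "finite_labels (wgraft x B A) \<and> all_labelled (wgraft x B A)"
proof -
  have B: "finite (lbl B)" "lbl B \<noteq> {}"
    using assms(4,5) lbl_nonempty subtree_self unfolding finite_labels_def by blast+
  have "finite (lbl S') \<and> lbl S' \<noteq> {}" if S': "S' \<in># subtrees (wgraft x B A)" for S'
  proof -
    from subtrees_wgraft[OF assms(1,2) S'] consider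
        (grafted) S where "S \<in># subtrees A" "S' = wgraft x B S"
      | (untouched) "S' \<in># subtrees A"
      | (inserted) "S' \<in># subtrees B" by blast
    then show ?thesis
    proof cases
      case grafted
      then have "finite (lbl S)" "lbl S \<noteq> {}"
        using assms(1,3) unfolding finite_labels_def all_labelled_def by auto
      then show ?thesis using grafted(2) B by (auto simp: lbl_wgraft)
    qed (use assms in \<open>auto simp: finite_labels_def all_labelled_def\<close>)
  qed
  then show ?thesis unfolding finite_labels_def all_labelled_def by blast
qed

lemma labels_subtree_relabel:
  assumes "rec_labelled T" "S \<in># subtrees (relabel f T)"
  shows "\<exists>a b. labels S = f ` {a..b}"
proof -
  obtain S0 where S0: "S0 \<in># subtrees T" "S = relabel f S0"
    using assms(2) by (auto simp: subtrees_relabel)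
  moreover obtain a b where "labels S0 = {a..b}"
    using assms(1) S0(1) unfolding rec_labelled_def by blast
  ultimately show ?thesis by auto
qed

text \<open>Recursive labelling survives composition: a subtree of the result containing the grafting
  point has the interval of the old subtree enlarged by the inserted block; the other subtrees
  are shifted copies of old ones.\<close>
lemma rec_labelled_comp:
  fixes T1 T2 :: rwt and x n :: nat
  defines "A \<equiv> relabel (gap_up x n) T1" and "B \<equiv> relabel (\<lambda>y. y + x - 1) T2"
  assumes rec: "rec_labelled T1" "rec_labelled T2" and labB: "labels T2 = {1..n}"
    and n: "1 \<le> n" and x: "1 \<le> x" and A: "finite_labels A" "distinct_labels A"
  shows "rec_labelled (wgraft x B A)"
  unfolding rec_labelled_def
proof
  have labelsB: "labels B = {x..x+n-1}"
    using labB shift_image[OF x, of 1 n] unfolding B_def by (simp add: add.commute)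
  fix S' assume "S' \<in># subtrees (wgraft x B A)"
  from subtrees_wgraft[OF A this] consider
      (grafted) S where "S \<in># subtrees A" "x \<in> labels S" "S' = wgraft x B S"
    | (untouched) "S' \<in># subtrees A" "x \<notin> labels S'"
    | (inserted) "S' \<in># subtrees B" by blast
  then show "\<exists>a b. labels S' = {a..b}"
  proof cases
    case grafted
    obtain a b where ab: "labels S = gap_up x n ` {a..b}"
      using labels_subtree_relabel[OF rec(1) grafted(1)[unfolded A_def]] by blast
    moreover obtain y where "y \<in> {a..b}" "gap_up x n y = x" using grafted(2) ab by auto
    ultimately have "x \<in> {a..b}" using gap_up_eq_self[OF n] by auto
    have "x \<in> labels B" using labelsB n by simp
    then have "labels S' = labels S \<union> labels B"
      using grafted(2,3) labels_wgraft[of x B S] by simp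
    also have "\<dots> = {a..b+n-1}"
      using ab labelsB gap_up_image_fill[OF n] \<open>x \<in> {a..b}\<close> by simp
    finally show ?thesis by blast
  next
    case untouched
    obtain a b where ab: "labels S' = gap_up x n ` {a..b}"
      using labels_subtree_relabel[OF rec(1) untouched(1)[unfolded A_def]] by blast
    have "gap_up x n x = x" by (simp add: gap_up_def)
    then have "x \<notin> {a..b}" using untouched(2) ab by (metis imageI)
    then show ?thesis using ab gap_up_image_interval[OF n] by auto
  next
    case inserted
    obtain a b where "labels S' = (\<lambda>y. y + x - 1) ` {a..b}"
      using labels_subtree_relabel[OF rec(2) inserted[unfolded B_def]] by blast
    then have "labels S' = {a+x-1..b+x-1}" using shift_image[OF x] by simp
    then show ?thesis by blast
  qed
qed

lemma interval_split_mset: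
  fixes x m n :: nat
  assumes x: "1 \<le> x" "x \<le> m" and n: "1 \<le> n"
  shows "mset_set ({1..x} \<union> {x+n..m+n-1}) + mset_set {x..x+n-1} = add_mset x (mset_set {1..m+n-1})"
proof -
  have "({1..x} \<union> {x+n..m+n-1}) \<inter> ({x..x+n-1} - {x}) = {}" by auto
  then have "mset_set ({1..x} \<union> {x+n..m+n-1}) + mset_set ({x..x+n-1} - {x})
      = mset_set ({1..x} \<union> {x+n..m+n-1} \<union> ({x..x+n-1} - {x}))"
    by (simp add: mset_set_Union)
  also have "{1..x} \<union> {x+n..m+n-1} \<union> ({x..x+n-1} - {x}) = {1..m+n-1}" using x n by auto
  finally have "mset_set ({1..x} \<union> {x+n..m+n-1}) + mset_set ({x..x+n-1} - {x})
      = mset_set {1..m+n-1}" .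
  moreover have "mset_set {x..x+n-1} = add_mset x (mset_set ({x..x+n-1} - {x}))"
    using n by (simp add: mset_set.remove)
  ultimately show ?thesis by simp
qed

lemma rec_white_comp:
  assumes T1: "rec_white m T1" and T2: "rec_white n T2" and x: "1 \<le> x" "x \<le> m"
  shows "rec_white (m + n - 1) (rw_comp n x T1 T2)"
proof -
  define A where "A = relabel (gap_up x n) T1"
  define B where "B = relabel (\<lambda>y. y + x - 1) T2"
  have n: "1 \<le> n" using rec_white_arity_pos[OF T2] .
  have comp: "rw_comp n x T1 T2 = wgraft x B A"
    unfolding A_def B_def using T2 lbl_nonempty by (intro rw_comp_white) (auto simp: rec_white_def)
  have imA: "gap_up x n ` {1..m} = {1..x} \<union> {x+n..m+n-1}"
    using x n by (simp add: gap_up_image min_absorb2 max_absorb2)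
  have imB: "(\<lambda>y. y + x - 1) ` {1..n} = {x..x+n-1}"
    using shift_image[OF x(1), of 1 n] by (simp add: add.commute)
  have "inj_on (gap_up x n) {1..m}" using inj_gap_up[OF n] by (rule inj_on_subset) simp
  then have mA: "label_mset A = mset_set ({1..x} \<union> {x+n..m+n-1})"
    unfolding A_def using label_mset_relabel_rec_white[OF T1] imA by simp
  have "inj_on (\<lambda>y. y + x - 1) {1..n}" using x by (auto simp: inj_on_def)
  then have mB: "label_mset B = mset_set {x..x+n-1}"
    unfolding B_def using label_mset_relabel_rec_white[OF T2] imB by simp
  have invA: "finite_labels A" "all_labelled A" "distinct_labels A"
    using T1 distinct_labels_mset_set[OF mA]
    unfolding A_def rec_white_def by (auto simp: finite_labels_relabel all_labelled_relabel)
  have invB: "finite_labels B" "all_labelled B"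
    using T2 unfolding B_def rec_white_def by (auto simp: finite_labels_relabel all_labelled_relabel)
  have "label_mset (wgraft x B A) + {#x#} = label_mset A + label_mset B"
  proof (rule label_mset_wgraft)
    show "count (label_mset A) x = 1" using mA x by simp
    have "labels A = {1..x} \<union> {x+n..m+n-1}" "labels B = {x..x+n-1}"
      using set_label_mset[OF invA(1)] set_label_mset[OF invB(1)] mA mB by simp_all
    then show "labels A \<inter> labels B \<subseteq> {x}" using n by auto
    show "finite (lbl B)" using invB(1) subtree_self unfolding finite_labels_def by blast
  qed (rule invA(1))
  moreover have "label_mset A + label_mset B = add_mset x (mset_set {1..m + n - 1})"
    using mA mB interval_split_mset[OF x n] by simp
  ultimately have "label_mset (wgraft x B A) = mset_set {1..m + n - 1}" by simp
  moreover have "rec_labelled (wgraft x B A)"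
    using T1 T2 labels_rec_white[OF T2] n x invA
    unfolding A_def B_def by (intro rec_labelled_comp) (auto simp: rec_white_def)
  ultimately show ?thesis
    using comp wgraft_invariants[OF invA(1,3,2) invB] by (simp add: rec_white_def)
qed

lemma singleton_interval: "\<exists>a b. {c::nat} = {a..b}"
  by (intro exI[of _ c]) simp

lemma rec_white_unit: "rec_white 1 A_unit"
  unfolding rec_white_def A_unit_def rec_labelled_def finite_labels_def all_labelled_def
  by (auto simp: label_mset_Node singleton_interval)

lemma rec_white_generators: "rec_white 2 A_mu" "rec_white 2 A_prec" "rec_white 2 A_succ"
proof -
  have int: "{Suc 0..2} = {Suc 0, 2}" by auto
  have pair: "\<exists>a b. {Suc 0, 2} = {a..b}" using int by metis
  show "rec_white 2 A_mu" "rec_white 2 A_prec" "rec_white 2 A_succ"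
    unfolding rec_white_def A_mu_def A_prec_def A_succ_def rec_labelled_def
      finite_labels_def all_labelled_def
    by (simp_all add: label_mset_Node int pair singleton_interval insert_commute add_mset_commute)
qed

theorem generated_rec_white:
  "gen_by {(2, A_mu), (2, A_prec), (2, A_succ)} n T \<Longrightarrow> rec_white n T"
proof (induction rule: gen_by.induct)
  case unit then show ?case by (rule rec_white_unit)
next
  case (gen k T) then show ?case using rec_white_generators by blast
next
  case (comp m T1 n T2 x)
  show ?case using comp.IH comp.hyps(3,4) by (rule rec_white_comp)
qed

section \<open>Completeness: the shape of trees with distinct labels\<close>

lemma label_determines_subtree:
  assumes "finite_labels T" "distinct_labels T" "S \<in># subtrees T" "S' \<in># subtrees T"
    and "z \<in> lbl S" "z \<in> lbl S'"
  shows "S = S'"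
  using assms
proof (induction T arbitrary: S S')
  case (Node L C)
  have inkid: "z \<in> labels c" if "c \<in># C" "U \<in># subtrees c" "z \<in> lbl U" for c U
    using labels_subtree[OF that(2)] lbl_subset_labels[of U] that(3) by blast
  consider "S = Node L C" "S' = Node L C"
    | "S = Node L C \<or> S' = Node L C" "S \<noteq> S'"
    | c c' where "c \<in># C" "S \<in># subtrees c" "c' \<in># C" "S' \<in># subtrees c'"
    using Node.prems(3,4) by auto
  then show ?case
  proof cases
    case 2
    then obtain c U where "c \<in># C" "U \<in># subtrees c" "z \<in> lbl U" "z \<in> L"
      using Node.prems(3-6) by auto
    then show ?thesis using node_label_not_in_kid[OF Node.prems(1,2)] inkid by blast
  next
    case (3 c c')
    obtain C' where C': "C = add_mset c C'" using 3(1) by (metis multi_member_split)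
    show ?thesis
    proof (cases "c' = c")
      case True
      then show ?thesis
        using Node.IH[OF 3(1) kid_inherits(1)[OF 3(1) Node.prems(1)]
            kid_inherits(3)[OF 3(1) Node.prems(2)] 3(2)] 3(4) Node.prems(5,6) by blast
    next
      case False
      then have "c' \<in># C'" using 3(3) C' by auto
      then show ?thesis
        using kids_disjoint[OF Node.prems(1,2) C'] inkid 3 Node.prems(5,6) by blast
    qed
  qed simp
qed

lemma single_label_leaf:
  assumes "finite_labels T" "all_labelled T" "distinct_labels T" "labels T = {z}"
  shows "T = Node {z} {#}"
proof (cases T)
  case (Node L C)
  have "L = {z}" using assms(2,4) Node by (auto simp: all_labelled_Node)
  have "C = {#}"
  proof (rule ccontr)
    assume "C \<noteq> {#}"
    then obtain c where c: "c \<in># C" by blast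
    then have "lbl c \<noteq> {}" using assms(2) Node by (simp add: all_labelled_Node lbl_nonempty)
    moreover have "lbl c \<subseteq> {z}" using assms(4) Node c lbl_subset_labels[of c] by auto
    ultimately have "z \<in> labels c" using lbl_subset_labels[of c] by blast
    then show False using node_label_not_in_kid assms(1,3) Node \<open>L = {z}\<close> c by blast
  qed
  then show ?thesis using Node \<open>L = {z}\<close> by simp
qed

lemma rec_white_arity_one: "rec_white 1 T \<Longrightarrow> T = A_unit"
  using single_label_leaf[of T 1] labels_rec_white[of 1 T] rec_white_distinct[of 1 T]
  unfolding rec_white_def A_unit_def by simp

text \<open>Composing with A_mu, A_prec or A_succ at x
  creates exactly such configurations.\<close>
definition adjacent_pair :: "nat \<Rightarrow> rwt \<Rightarrow> bool" where
  "adjacent_pair x S \<longleftrightarrow> {x, Suc x} \<subseteq> lbl S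
     \<or> (x \<in> lbl S \<and> Node {Suc x} {#} \<in># kids S) \<or> (Suc x \<in> lbl S \<and> Node {x} {#} \<in># kids S)"

lemma discrete_ivt: "Q l \<Longrightarrow> \<not> Q r \<Longrightarrow> l \<le> r \<Longrightarrow> \<exists>y. l \<le> y \<and> y < r \<and> Q y \<and> \<not> Q (Suc y)"
proof (induction r)
  case (Suc r)
  have "l \<le> r" using Suc.prems by (metis le_SucE)
  show ?case
  proof (cases "Q r")
    case True
    then show ?thesis using \<open>l \<le> r\<close> Suc.prems(2) by blast
  next
    case False
    then obtain y where "l \<le> y" "y < r" "Q y" "\<not> Q (Suc y)"
      using Suc.IH Suc.prems(1) \<open>l \<le> r\<close> by blast
    then show ?thesis by (intro exI[of _ y]) auto
  qed
qed simp

text \<open>A node whose label set is an interval with at least two elements and whose children are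
  all leaves carries an adjacent pair: walk from a label of the node to a label of a child.\<close>
lemma adjacent_pair_at_node:
  assumes fin: "finite_labels (Node L C)" and all: "all_labelled (Node L C)"
    and dist: "distinct_labels (Node L C)" and int: "labels (Node L C) = {lo..hi}" "lo < hi"
    and leaves: "\<And>c z. c \<in># C \<Longrightarrow> z \<in> labels c \<Longrightarrow> c = Node {z} {#}"
  shows "\<exists>x. adjacent_pair x (Node L C)"
proof (cases "C = {#}")
  case True
  then have "{lo, Suc lo} \<subseteq> L" using int by auto
  then show ?thesis unfolding adjacent_pair_def by auto
next
  case False
  have leaf_kid: "Node {z} {#} \<in># C" if z: "z \<in> {lo..hi}" "z \<notin> L" for z
  proof -
    have "z \<in> labels (Node L C)" using z(1) int by simp
    then obtain c where "c \<in># C" "z \<in> labels c" using z(2) by auto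
    then show ?thesis using leaves by metis
  qed
  obtain l where l: "l \<in> L" using all by (auto simp: all_labelled_Node)
  obtain c0 where c0: "c0 \<in># C" using False by blast
  then obtain a where a: "a \<in> labels c0"
    using all lbl_nonempty lbl_subset_labels by (fastforce simp: all_labelled_Node)
  have "a \<notin> L" using node_label_not_in_kid[OF fin dist _ c0] a by blast
  have range: "l \<in> {lo..hi}" "a \<in> {lo..hi}" using int l a c0 by auto
  show ?thesis
  proof (cases "l < a")
    case True
    then obtain y where "l \<le> y" "y < a" "y \<in> L" "Suc y \<notin> L"
      using discrete_ivt[of "\<lambda>z. z \<in> L" l a] l \<open>a \<notin> L\<close> by auto
    then have "adjacent_pair y (Node L C)"
      using leaf_kid[of "Suc y"] range unfolding adjacent_pair_def by auto
    then show ?thesis by blast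
  next
    case False
    then have "a < l" using \<open>a \<notin> L\<close> l by (cases "a = l") auto
    then obtain y where "a \<le> y" "y < l" "y \<notin> L" "Suc y \<in> L"
      using discrete_ivt[of "\<lambda>z. z \<notin> L" a l] l \<open>a \<notin> L\<close> by auto
    then have "adjacent_pair y (Node L C)"
      using leaf_kid[of y] range unfolding adjacent_pair_def by auto
    then show ?thesis by blast
  qed
qed

text \<open>Every recursively labelled white tree with two distinct labels has an adjacent pair:
  descend into a child with two labels as long as possible.\<close>
lemma adjacent_pair_exists:
  assumes "finite_labels T" "all_labelled T" "distinct_labels T" "rec_labelled T"
    and "u \<in> labels T" "v \<in> labels T" "u \<noteq> v"
  shows "\<exists>x S. S \<in># subtrees T \<and> adjacent_pair x S"
  using assms
proof (induction T arbitrary: u v)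
  case (Node L C)
  show ?case
  proof (cases "\<exists>c\<in>#C. \<exists>u\<in>labels c. \<exists>v\<in>labels c. u \<noteq> v")
    case True
    then obtain c u' v' where c: "c \<in># C" "u' \<in> labels c" "v' \<in> labels c" "u' \<noteq> v'" by blast
    then show ?thesis
      using Node.IH[OF c(1) _ _ _ _ c(2,3,4)] kid_inherits[OF c(1)] Node.prems(1-4)
      by (meson kid_subtree subtree_trans)
  next
    case False
    obtain lo hi where int: "labels (Node L C) = {lo..hi}"
      using Node.prems(4) subtree_self unfolding rec_labelled_def by blast
    have "lo < hi" using int Node.prems(5-7) by auto
    moreover have "c = Node {z} {#}" if "c \<in># C" "z \<in> labels c" for c z
      using single_label_leaf kid_inherits[OF that(1)] Node.prems(1-3) False that by blast
    ultimately show ?thesis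
      using adjacent_pair_at_node[OF Node.prems(1-3) int] subtree_self by blast
  qed
qed

section \<open>Completeness: deleting a label\<close>

text \<open>prune r T deletes the label r and removes the leaves that become empty; it undoes the
  composition with a binary generator, up to renumbering.\<close>
primrec prune :: "nat \<Rightarrow> rwt \<Rightarrow> rwt" where
  "prune r (Node L C) =
     Node (L - {r}) (filter_mset (\<lambda>c. c \<noteq> Node {} {#}) (image_mset (prune r) C))"

lemma lbl_prune [simp]: "lbl (prune r T) = lbl T - {r}"
  by (cases T) auto

lemma kid_not_empty_leaf: "all_labelled (Node L C) \<Longrightarrow> c \<in># C \<Longrightarrow> c \<noteq> Node {} {#}"
  by (auto simp: all_labelled_Node)

lemma filter_nonempty_kids:
  "(\<And>c. c \<in># C \<Longrightarrow> c \<noteq> Node {} {#}) \<Longrightarrow> filter_mset (\<lambda>c. c \<noteq> Node {} {#}) C = C"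
  by (simp add: filter_mset_eq_conv)

lemma prune_id: "r \<notin> labels T \<Longrightarrow> all_labelled T \<Longrightarrow> prune r T = T"
proof (induction T)
  case (Node L C)
  then have "image_mset (prune r) C = C"
    by (auto simp: all_labelled_Node intro!: image_mset_fixed)
  then show ?case
    using Node.prems kid_not_empty_leaf[OF Node.prems(2)] by (auto simp: filter_nonempty_kids)
qed

lemma prune_node:
  assumes "\<And>c. c \<in># C \<Longrightarrow> r \<notin> labels c" "all_labelled (Node L C)"
  shows "prune r (Node L C) = Node (L - {r}) C"
    and "prune r (Node L (add_mset (Node {r} {#}) C)) = Node (L - {r}) C"
proof -
  have "image_mset (prune r) C = C"
    using assms by (auto simp: all_labelled_Node intro!: image_mset_fixed prune_id)
  moreover have "filter_mset (\<lambda>c. c \<noteq> Node {} {#}) C = C"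
    using kid_not_empty_leaf[OF assms(2)] by (rule filter_nonempty_kids)
  ultimately show "prune r (Node L C) = Node (L - {r}) C"
    and "prune r (Node L (add_mset (Node {r} {#}) C)) = Node (L - {r}) C" by simp_all
qed

lemma labels_prune: "labels (prune r T) = labels T - {r}"
proof (induction T)
  case (Node L C)
  have "(\<Union>c\<in>set_mset (filter_mset (\<lambda>c. c \<noteq> Node {} {#}) (image_mset (prune r) C)). labels c)
      = (\<Union>c\<in>set_mset C. labels (prune r c))"
    by force
  then show ?case using Node.IH by auto
qed

lemma label_mset_prune:
  "finite_labels T \<Longrightarrow> label_mset (prune r T) = filter_mset (\<lambda>z. z \<noteq> r) (label_mset T)"
proof (induction T)
  case (Node L C)
  have drop_empty: "\<Sum>\<^sub># (image_mset label_mset (filter_mset (\<lambda>c. c \<noteq> Node {} {#}) M))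
      = \<Sum>\<^sub># (image_mset label_mset M)" for M
    by (induction M) (auto simp: label_mset_Node)
  have "image_mset label_mset (image_mset (prune r) C)
      = image_mset (\<lambda>c. filter_mset (\<lambda>z. z \<noteq> r) (label_mset c)) C"
    using Node by (auto simp: finite_labels_Node image_mset.compositionality intro!: image_mset_cong)
  moreover have "L - {r} = {z \<in> L. z \<noteq> r}" by auto
  ultimately show ?case
    using Node.prems
    by (simp add: label_mset_Node drop_empty filter_sum_mset finite_labels_Node
        image_mset.compositionality comp_def)
qed

lemma subtrees_prune: "S' \<in># subtrees (prune r T) \<Longrightarrow> \<exists>S\<in>#subtrees T. S' = prune r S"
proof (induction T arbitrary: S')
  case (Node L C)
  show ?case
  proof (cases "S' = prune r (Node L C)")
    case False
    then obtain c where c: "c \<in># C" "S' \<in># subtrees (prune r c)" using Node.prems by auto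
    then show ?thesis using Node.IH[OF c] by auto
  qed (use subtree_self in blast)
qed

lemma subtrees_prune_nonempty:
  "S' \<in># subtrees (prune r T) \<Longrightarrow> S' \<noteq> prune r T \<Longrightarrow> S' \<noteq> Node {} {#}"
proof (induction T arbitrary: S')
  case (Node L C)
  then obtain c where c: "c \<in># C" "prune r c \<noteq> Node {} {#}" "S' \<in># subtrees (prune r c)"
    by auto
  then show ?case using Node.IH[OF c(1) c(3)] by (cases "S' = prune r c") auto
qed

lemma finite_labels_prune: "finite_labels T \<Longrightarrow> finite_labels (prune r T)"
  unfolding finite_labels_def using subtrees_prune by fastforce

lemma all_labelled_prune:
  assumes "all_labelled T" and leaf: "\<forall>S\<in>#subtrees T. lbl S = {r} \<longrightarrow> S = Node {r} {#}"
    and "lbl T \<noteq> {r}"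
  shows "all_labelled (prune r T)"
  unfolding all_labelled_def
proof
  fix S' assume S': "S' \<in># subtrees (prune r T)"
  then obtain S where S: "S \<in># subtrees T" "S' = prune r S" using subtrees_prune by blast
  have "lbl S \<noteq> {}" using assms(1) S(1) unfolding all_labelled_def by blast
  show "lbl S' \<noteq> {}"
  proof (cases "S' = prune r T")
    case True
    then show ?thesis using assms(1,3) lbl_nonempty by fastforce
  next
    case False
    then have "S' \<noteq> Node {} {#}" using subtrees_prune_nonempty[OF S'] by blast
    then show ?thesis using S leaf \<open>lbl S \<noteq> {}\<close> by fastforce
  qed
qed

lemma rec_white_prune:
  assumes T: "rec_white n T" and r: "r \<in> {x, Suc x}" and x: "1 \<le> x" "Suc x \<le> n"
    and leaf: "\<forall>S\<in>#subtrees T. lbl S = {r} \<longrightarrow> S = Node {r} {#}" and root: "lbl T \<noteq> {r}"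
  shows "rec_white (n - 1) (relabel (close_gap x) (prune r T))"
proof -
  have fin: "finite_labels T" "finite_labels (prune r T)"
    using T finite_labels_prune unfolding rec_white_def by auto
  have rn: "r \<in> {1..n}" using r x by auto
  have "labels (prune r T) = {1..n} - {r}" using labels_rec_white[OF T] labels_prune by simp
  then have "label_mset (relabel (close_gap x) (prune r T))
      = image_mset (close_gap x) (label_mset (prune r T))"
    using label_mset_relabel inj_on_close_gap[OF r] fin(2) by metis
  also have "\<dots> = image_mset (close_gap x) (mset_set ({1..n} - {r}))"
    using label_mset_prune[OF fin(1)] T unfolding rec_white_def by (simp add: set_diff_eq)
  also have "\<dots> = mset_set {1..n-1}"
    using inj_on_close_gap[OF r] close_gap_image_remove[OF r rn x(1)]
    by (simp add: image_mset_mset_set)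
  finally have "label_mset (relabel (close_gap x) (prune r T)) = mset_set {1..n - 1}" .
  moreover have "rec_labelled (relabel (close_gap x) (prune r T))"
    unfolding rec_labelled_def
  proof
    fix S' assume "S' \<in># subtrees (relabel (close_gap x) (prune r T))"
    then obtain S1 where "S1 \<in># subtrees (prune r T)" "S' = relabel (close_gap x) S1"
      by (auto simp: subtrees_relabel)
    then obtain S where "S \<in># subtrees T" "S' = relabel (close_gap x) (prune r S)"
      using subtrees_prune by blast
    moreover obtain a b where "labels S = {a..b}"
      using T \<open>S \<in># subtrees T\<close> unfolding rec_white_def rec_labelled_def by blast
    ultimately show "\<exists>a b. labels S' = {a..b}"
      using close_gap_image_interval[OF r x(1)] by (simp add: labels_prune)
  qed
  ultimately show ?thesis
    using T fin all_labelled_prune[OF _ leaf root]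
    unfolding rec_white_def by (simp add: finite_labels_relabel all_labelled_relabel)
qed

section \<open>Completeness: undoing a composition\<close>

text \<open>Grafting back at x inside the subtree S0 containing x and x+1 rebuilds the whole tree, since
  no other part of the tree carries x or x+1.\<close>
lemma wgraft_prune_subtree:
  assumes "finite_labels T" "distinct_labels T" "all_labelled T" "S0 \<in># subtrees T"
    and "x \<in> labels S0" "Suc x \<in> labels S0" "r \<in> {x, Suc x}"
    and "wgraft x G (relabel (merge_succ x) (prune r S0)) = S0"
  shows "wgraft x G (relabel (merge_succ x) (prune r T)) = T"
  using assms
proof (induction T)
  case (Node L C)
  show ?case
  proof (cases "S0 = Node L C")
    case False
    then obtain c0 where c0: "c0 \<in># C" "S0 \<in># subtrees c0" using Node.prems(4) by auto
    obtain C' where C': "C = add_mset c0 C'" using c0 by (metis multi_member_split)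
    have in_c0: "x \<in> labels c0" "Suc x \<in> labels c0"
      using labels_subtree[OF c0(2)] Node.prems(5,6) by auto
    have "z \<notin> L" if "z \<in> labels c0" for z
      using node_label_not_in_kid[OF Node.prems(1,2) _ c0(1)] that by blast
    then have notL: "x \<notin> L" "Suc x \<notin> L" using in_c0 by auto
    have "z \<notin> labels c" if "z \<in> labels c0" "c \<in># C'" for z c
      using kids_disjoint[OF Node.prems(1,2) C' that] .
    then have others: "x \<notin> labels c" "Suc x \<notin> labels c" if "c \<in># C'" for c
      using in_c0 that by auto
    have all: "all_labelled (Node L C')" "all_labelled c0"
      using Node.prems(3) C' by (auto simp: all_labelled_Node)
    have "labels (prune r c0) \<noteq> {}"
      using labels_prune[of r c0] in_c0 Node.prems(7) by auto
    then have "prune r c0 \<noteq> Node {} {#}" by auto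
    moreover have "prune r (Node L C') = Node L C'"
      using prune_node(1)[OF _ all(1)] others Node.prems(7) notL by auto
    ultimately have "prune r (Node L C) = Node L (add_mset (prune r c0) C')"
      using C' by simp
    moreover have "relabel (merge_succ x) (Node L C') = Node L C'"
      using others notL by (intro relabel_id) (auto simp: merge_succ_def)
    moreover have "wgraft x G (Node L C') = Node L C'"
      using others notL by (intro wgraft_id) auto
    moreover have "wgraft x G (relabel (merge_succ x) (prune r c0)) = c0"
      using Node.IH[OF c0(1) kid_inherits(1)[OF c0(1) Node.prems(1)]
          kid_inherits(3)[OF c0(1) Node.prems(2)] all(2) c0(2) Node.prems(5-8)] .
    ultimately show ?thesis using C' notL by simp
  qed (use Node.prems in simp)
qed

lemma reconstruct_mu:
  assumes "finite_labels S0" "distinct_labels S0" "all_labelled S0" "x \<in> lbl S0" "Suc x \<in> lbl S0"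
  shows "wgraft x (Node {x, Suc x} {#}) (relabel (merge_succ x) (prune (Suc x) S0)) = S0"
proof (cases S0)
  case (Node L C)
  have "prune (Suc x) S0 = Node (L - {Suc x}) C"
    using prune_node(1) node_label_not_in_kid assms(1-3,5) Node by simp
  moreover have "relabel (merge_succ x) (Node (L - {Suc x}) C) = Node (L - {Suc x}) C"
    using calculation labels_prune[of "Suc x" S0] by (intro relabel_id) (auto simp: merge_succ_def)
  moreover have "(L - {Suc x} - {x}) \<union> {x, Suc x} = L" using assms(4,5) Node by auto
  ultimately show ?thesis using assms(4) Node by simp
qed

lemma reconstruct_prec:
  assumes "finite_labels S0" "distinct_labels S0" "all_labelled S0" "x \<in> lbl S0"
    and "Node {Suc x} {#} \<in># kids S0"
  shows "wgraft x (Node {x} {# Node {Suc x} {#} #}) (relabel (merge_succ x) (prune (Suc x) S0)) = S0"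
proof (cases S0)
  case (Node L C)
  obtain C' where C': "C = add_mset (Node {Suc x} {#}) C'"
    using assms(5) Node by (metis multi_member_split rwt.sel(2))
  have others: "Suc x \<notin> labels c" if "c \<in># C'" for c
    using kids_disjoint[of L C "Node {Suc x} {#}" C'] assms(1,2) Node C' that by simp
  have "Suc x \<notin> L"
    using node_label_not_in_kid[of L C "Suc x" "Node {Suc x} {#}"] assms(1,2) Node C' by auto
  moreover have "all_labelled (Node L C')" using assms(3) Node C' by (simp add: all_labelled_Node)
  ultimately have "prune (Suc x) S0 = Node L C'" using prune_node(2) others Node C' by simp
  moreover have "relabel (merge_succ x) (Node L C') = Node L C'"
    using calculation labels_prune[of "Suc x" S0] by (intro relabel_id) (auto simp: merge_succ_def)
  moreover have "(L - {x}) \<union> {x} = L" using assms(4) Node by auto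
  ultimately show ?thesis using assms(4) Node C' by simp
qed

lemma reconstruct_succ:
  assumes "finite_labels S0" "distinct_labels S0" "all_labelled S0" "Suc x \<in> lbl S0"
    and "Node {x} {#} \<in># kids S0"
  shows "wgraft x (Node {Suc x} {# Node {x} {#} #}) (relabel (merge_succ x) (prune x S0)) = S0"
proof (cases S0)
  case (Node L C)
  obtain C' where C': "C = add_mset (Node {x} {#}) C'"
    using assms(5) Node by (metis multi_member_split rwt.sel(2))
  have others: "x \<notin> labels c" "Suc x \<notin> labels c" if "c \<in># C'" for c
    using kids_disjoint[of L C "Node {x} {#}" C'] node_label_not_in_kid[of L C "Suc x" c]
      assms(1,2,4) Node C' that by simp_all
  have "x \<notin> L"
    using node_label_not_in_kid[of L C x "Node {x} {#}"] assms(1,2) Node C' by auto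
  moreover have "all_labelled (Node L C')" using assms(3) Node C' by (simp add: all_labelled_Node)
  ultimately have "prune x S0 = Node L C'" using prune_node(2) others Node C' by simp
  moreover have "image_mset (relabel (merge_succ x)) C' = C'"
    using others by (auto intro!: image_mset_fixed relabel_id simp: merge_succ_def)
  moreover have "merge_succ x ` L = (L - {Suc x}) \<union> {x}"
    using assms(4) Node by (auto simp: merge_succ_def)
  moreover have "((L - {Suc x}) \<union> {x} - {x}) \<union> {Suc x} = L" using assms(4) Node \<open>x \<notin> L\<close> by auto
  ultimately show ?thesis using Node C' by simp
qed

lemma singleton_nodes:
  assumes "finite_labels T" "distinct_labels T" "S0 \<in># subtrees T" "r \<in> lbl S0"
    and "lbl S0 = {r} \<Longrightarrow> S0 = Node {r} {#}"
  shows "\<forall>S\<in>#subtrees T. lbl S = {r} \<longrightarrow> S = Node {r} {#}"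
  using label_determines_subtree[OF assms(1,2) _ assms(3)] assms(4,5) by blast

lemma decompose_at:
  assumes T: "rec_white n T" and n: "2 \<le> n" and S0: "S0 \<in># subtrees T"
    and pair: "x \<in> labels S0" "Suc x \<in> labels S0" and r: "r \<in> {x, Suc x}"
    and leaf: "\<forall>S\<in>#subtrees T. lbl S = {r} \<longrightarrow> S = Node {r} {#}" and G: "rec_white 2 G"
    and rebuild: "wgraft x (relabel (\<lambda>y. y + x - 1) G) (relabel (merge_succ x) (prune r S0)) = S0"
  defines "T1 \<equiv> relabel (close_gap x) (prune r T)"
  shows "rec_white (n - 1) T1" "1 \<le> x" "x \<le> n - 1" "T = rw_comp 2 x T1 G"
proof -
  have inv: "finite_labels T" "all_labelled T" "distinct_labels T"
    using T rec_white_distinct unfolding rec_white_def by auto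
  have "x \<in> {1..n}" "Suc x \<in> {1..n}" using labels_subtree[OF S0] pair labels_rec_white[OF T] by auto
  then show x: "1 \<le> x" "x \<le> n - 1" by auto
  have "lbl T \<noteq> {r}"
  proof
    assume "lbl T = {r}"
    then have "T = Node {r} {#}" using leaf subtree_self by blast
    then have "{1..n} = {r}" using labels_rec_white[OF T] by simp
    moreover have "1 \<in> {1..n}" "2 \<in> {1..n}" using n by auto
    ultimately show False by auto
  qed
  then show "rec_white (n - 1) T1"
    unfolding T1_def using rec_white_prune[OF T r _ _ leaf] x by simp
  have "lbl G \<noteq> {}" using G lbl_nonempty unfolding rec_white_def by blast
  then have "rw_comp 2 x T1 G
      = wgraft x (relabel (\<lambda>y. y + x - 1) G) (relabel (merge_succ x) (prune r T))"
    unfolding T1_def by (simp add: rw_comp_white relabel_comp gap_up_close_gap)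
  also have "\<dots> = T" using wgraft_prune_subtree[OF inv(1,3,2) S0 pair r rebuild] .
  finally show "T = rw_comp 2 x T1 G" by simp
qed

lemma kid_of_subtree: "S \<in># subtrees T \<Longrightarrow> c \<in># kids S \<Longrightarrow> c \<in># subtrees T"
  by (cases S) (simp add: subtree_trans[OF _ kid_subtree])

lemma labels_kid: "c \<in># kids S \<Longrightarrow> labels c \<subseteq> labels S"
  by (cases S) auto

text \<open>Every tree satisfying the invariant with at least two labels is a composition of a smaller
  one with a generator: locate an adjacent pair and undo the corresponding composition.\<close>
lemma rec_white_decompose:
  assumes T: "rec_white n T" and n: "2 \<le> n"
  obtains x G T1 where "(2::nat, G) \<in> {(2, A_mu), (2, A_prec), (2, A_succ)}" "rec_white (n - 1) T1"
    "1 \<le> x" "x \<le> n - 1" "T = rw_comp 2 x T1 G"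
proof -
  have inv: "finite_labels T" "all_labelled T" "distinct_labels T" "rec_labelled T"
    using T rec_white_distinct unfolding rec_white_def by auto
  obtain x S0 where S0: "S0 \<in># subtrees T" "adjacent_pair x S0"
    using adjacent_pair_exists[OF inv, of 1 2] labels_rec_white[OF T] n by auto
  have S0_inv: "finite_labels S0" "distinct_labels S0" "all_labelled S0"
    using subtree_inherits[OF S0(1)] inv by auto
  have lbl_labels: "z \<in> labels S0" if "z \<in> lbl S0" for z using lbl_subset_labels that by blast
  have leaf_label: "z \<in> labels S0" if "Node {z} {#} \<in># kids S0" for z using labels_kid[OF that] by simp
  consider (mu) "x \<in> lbl S0" "Suc x \<in> lbl S0"
    | (prec) "x \<in> lbl S0" "Node {Suc x} {#} \<in># kids S0"
    | (succ) "Suc x \<in> lbl S0" "Node {x} {#} \<in># kids S0"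
    using S0(2) unfolding adjacent_pair_def by blast
  then show ?thesis
  proof cases
    case mu
    have leaf: "\<forall>S\<in>#subtrees T. lbl S = {Suc x} \<longrightarrow> S = Node {Suc x} {#}"
      by (rule singleton_nodes[OF inv(1,3) S0(1) mu(2)]) (use mu(1) in simp)
    have "wgraft x (relabel (\<lambda>y. y + x - 1) A_mu) (relabel (merge_succ x) (prune (Suc x) S0)) = S0"
      using reconstruct_mu[OF S0_inv mu] by (simp add: A_mu_def)
    note d = decompose_at[OF T n S0(1) lbl_labels[OF mu(1)] lbl_labels[OF mu(2)] _ leaf
        rec_white_generators(1) this]
    show ?thesis by (rule that[OF _ d]) simp_all
  next
    case prec
    have leaf: "\<forall>S\<in>#subtrees T. lbl S = {Suc x} \<longrightarrow> S = Node {Suc x} {#}"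
      by (rule singleton_nodes[OF inv(1,3) kid_of_subtree[OF S0(1) prec(2)]]) simp_all
    have "wgraft x (relabel (\<lambda>y. y + x - 1) A_prec) (relabel (merge_succ x) (prune (Suc x) S0)) = S0"
      using reconstruct_prec[OF S0_inv prec] by (simp add: A_prec_def)
    note d = decompose_at[OF T n S0(1) lbl_labels[OF prec(1)] leaf_label[OF prec(2)] _ leaf
        rec_white_generators(2) this]
    show ?thesis by (rule that[OF _ d]) simp_all
  next
    case succ
    have leaf: "\<forall>S\<in>#subtrees T. lbl S = {x} \<longrightarrow> S = Node {x} {#}"
      by (rule singleton_nodes[OF inv(1,3) kid_of_subtree[OF S0(1) succ(2)]]) simp_all
    have "wgraft x (relabel (\<lambda>y. y + x - 1) A_succ) (relabel (merge_succ x) (prune x S0)) = S0"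
      using reconstruct_succ[OF S0_inv succ] by (simp add: A_succ_def)
    note d = decompose_at[OF T n S0(1) leaf_label[OF succ(2)] lbl_labels[OF succ(1)] _ leaf
        rec_white_generators(3) this]
    show ?thesis by (rule that[OF _ d]) simp_all
  qed
qed

theorem rec_white_generated:
  "rec_white n T \<Longrightarrow> gen_by {(2, A_mu), (2, A_prec), (2, A_succ)} n T"
proof (induction n arbitrary: T rule: less_induct)
  case (less n)
  show ?case
  proof (cases "2 \<le> n")
    case True
    obtain x G T1 where G: "(2::nat, G) \<in> {(2, A_mu), (2, A_prec), (2, A_succ)}"
      and T1: "rec_white (n - 1) T1" and x: "1 \<le> x" "x \<le> n - 1" and T: "T = rw_comp 2 x T1 G"
      using rec_white_decompose[OF less.prems True] .
    have "n - 1 < n" using True by simp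
    from gen_by.comp[OF less.IH[OF this T1] gen_by.gen[OF G] x]
    have "gen_by {(2, A_mu), (2, A_prec), (2, A_succ)} (n - 1 + 2 - 1) T" unfolding T .
    moreover have "n - 1 + 2 - 1 = n" using True by simp
    ultimately show ?thesis by simp
  next
    case False
    then have "n = 1" using rec_white_arity_pos[OF less.prems] by simp
    then have "T = A_unit" using rec_white_arity_one less.prems by simp
    then show ?thesis using \<open>n = 1\<close> gen_by.unit by simp
  qed
qed

theorem mainTheorem10:
  "gen_by {(2, A_mu), (2, A_prec), (2, A_succ)} n T \<longleftrightarrow>
     (T \<in> RW n \<and> rec_labelled T \<and> (\<forall>S \<in># subtrees T. lbl S \<noteq> {}))"
  unfolding rec_white_iff_RW using generated_rec_white rec_white_generated by blast

end
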